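(* Let $X_0,X_1$ be compatible Banach spaces, $\alpha_0>0$, $\alpha_0>\alpha_1$, $1\leqslant p<\infty$, $0<\theta<1$, $h>0$, and let $\varphi$ be a function on $\mathbb{R}^d$ with $\varphi_{x,r}(y)=\varphi\big(\frac{y-x}{r}\big)$. Assume that for every finite family $\mathfrak{B}$ of pairwise disjoint balls with radii less than $1$, $$\Big\|\sum_{B_{r_j}(x_j)\in\mathfrak{B}}\varphi_{x_j,r_j}\Big\|_{X_0}\lesssim\Big(\sum_{B_{r_j}(x_j)\in\mathfrak{B}}r_j^{\alpha_0}\Big)^{1/p},\qquad \Big\|\sum_{B_{r_j}(x_j)\in\mathfrak{B}}\varphi_{x_j,r_j}\Big\|_{X_1}\lesssim\Big(\sum_{B_{r_j}(x_j)\in\mathfrak{B}}r_j^{\alpha_1}\Big)^{1/p}$$ with constants independent of $\mathfrak{B}$. Let $\alpha_\theta=(1-\theta)\alpha_0+\theta\alpha_1$ and suppose $\alpha_\theta>0$. Then, with constants independent of $\mathfrak{B}$, $$\Big\|\sum_{B_{r_j}(x_j)\in\mathfrak{B}}\varphi_{x_j,r_j}\Big\|_{(X_0,X_1)_{\theta,h}}\lesssim\big\|\{r_j: B_{r_j}(x_j)\in\mathfrak{B}\}\big\|^{\alpha_\theta/p}_{\ell_{\alpha_\theta,\frac{h\alpha_\theta}{p}}}.$$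
   Context: Two (quasi-)Banach spaces are compatible if both are subspaces of a common Hausdorff topological vector space. $K(t,a)=\inf\{\|a_0\|_{X_0}+t\|a_1\|_{X_1}: a=a_0+a_1\}$ and $\|a\|_{(X_0,X_1)_{\theta,h}}=\big(\int_0^\infty(t^{-\theta}K(t,a))^h\frac{dt}{t}\big)^{1/h}$. Lorentz sequence space: $\|a\|^q_{\ell_{\alpha,q}}=q\int_0^\infty(m_a(t)t^\alpha)^{q/\alpha}\frac{dt}{t}$, $m_a(t)=\#\{j:|a_j|\geqslant t\}$. *)

theory Defs
  imports "HOL-Analysis.Analysis"
begin

definition banach_subspace :: "'v::real_vector set \<Rightarrow> ('v \<Rightarrow> real) \<Rightarrow> bool" where
  "banach_subspace X nX \<longleftrightarrow>
     subspace X \<and>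
     (\<forall>x\<in>X. nX x \<ge> 0) \<and>
     (\<forall>x\<in>X. nX x = 0 \<longleftrightarrow> x = 0) \<and>
     (\<forall>x\<in>X. \<forall>c. nX (c *\<^sub>R x) = \<bar>c\<bar> * nX x) \<and>
     (\<forall>x\<in>X. \<forall>y\<in>X. nX (x + y) \<le> nX x + nX y) \<and>
     (\<forall>f. (\<forall>k. f k \<in> X) \<longrightarrow>
          (\<forall>e>0. \<exists>N. \<forall>m\<ge>N. \<forall>k\<ge>N. nX (f m - f k) < e) \<longrightarrow>
          (\<exists>x\<in>X. (\<lambda>k. nX (f k - x)) \<longlonglongrightarrow> 0))"

definition hausdorff_tvs :: "'v::real_vector topology \<Rightarrow> bool" where
  "hausdorff_tvs T \<longleftrightarrow>
     topspace T = UNIV \<and> Hausdorff_space T \<and>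
     continuous_map (prod_topology T T) T (\<lambda>(x, y). x + y) \<and>
     continuous_map (prod_topology euclideanreal T) T (\<lambda>(c, x). c *\<^sub>R x)"

text \<open>Continuity of the inclusion of a normed subspace into (V,T); normed spaces are
first countable, so sequential continuity is continuity.\<close>
definition cont_embedded :: "'v::real_vector set \<Rightarrow> ('v \<Rightarrow> real) \<Rightarrow> 'v topology \<Rightarrow> bool" where
  "cont_embedded X nX T \<longleftrightarrow>
     (\<forall>f x. (\<forall>k. f k \<in> X) \<longrightarrow> x \<in> X \<longrightarrow> (\<lambda>k. nX (f k - x)) \<longlonglongrightarrow> 0 \<longrightarrow>
            limitin T f x sequentially)"

definition compatible_banach ::
  "'v::real_vector set \<Rightarrow> ('v \<Rightarrow> real) \<Rightarrow> 'v set \<Rightarrow> ('v \<Rightarrow> real) \<Rightarrow> bool" where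
  "compatible_banach X0 n0 X1 n1 \<longleftrightarrow>
     banach_subspace X0 n0 \<and> banach_subspace X1 n1 \<and>
     (\<exists>T. hausdorff_tvs T \<and> cont_embedded X0 n0 T \<and> cont_embedded X1 n1 T)"

definition Kfun ::
  "'v::real_vector set \<Rightarrow> ('v \<Rightarrow> real) \<Rightarrow> 'v set \<Rightarrow> ('v \<Rightarrow> real) \<Rightarrow> real \<Rightarrow> 'v \<Rightarrow> real" where
  "Kfun X0 n0 X1 n1 t a =
     Inf {n0 a0 + t * n1 a1 | a0 a1. a0 \<in> X0 \<and> a1 \<in> X1 \<and> a = a0 + a1}"

definition interp_norm ::
  "'v::real_vector set \<Rightarrow> ('v \<Rightarrow> real) \<Rightarrow> 'v set \<Rightarrow> ('v \<Rightarrow> real) \<Rightarrow> real \<Rightarrow> real \<Rightarrow> 'v \<Rightarrow> ennreal" where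
  "interp_norm X0 n0 X1 n1 \<theta> h a =
     (let I = (\<integral>\<^sup>+ t\<in>{0<..}. ennreal ((t powr (-\<theta>) * Kfun X0 n0 X1 n1 t a) powr h / t) \<partial>lborel)
      in if I = \<infinity> then \<infinity> else ennreal (enn2real I powr (1 / h)))"

definition distr_count :: "'j set \<Rightarrow> ('j \<Rightarrow> real) \<Rightarrow> real \<Rightarrow> nat" where
  "distr_count J a t = card {j \<in> J. \<bar>a j\<bar> \<ge> t}"

definition lorentz_norm :: "real \<Rightarrow> real \<Rightarrow> 'j set \<Rightarrow> ('j \<Rightarrow> real) \<Rightarrow> real" where
  "lorentz_norm \<alpha> q J a =
     (q * enn2real (\<integral>\<^sup>+ t\<in>{0<..}.
        ennreal ((real (distr_count J a t) * t powr \<alpha>) powr (q / \<alpha>) / t) \<partial>lborel)) powr (1 / q)"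

definition phi_xr :: "(real^'d \<Rightarrow> real) \<Rightarrow> real^'d \<Rightarrow> real \<Rightarrow> real^'d \<Rightarrow> real" where
  "phi_xr \<phi> x r = (\<lambda>y. \<phi> ((1 / r) *\<^sub>R (y - x)))"

definition admissible_balls :: "((real^'d) \<times> real) set \<Rightarrow> bool" where
  "admissible_balls \<B> \<longleftrightarrow> finite \<B> \<and> (\<forall>(x, r)\<in>\<B>. 0 < r \<and> r < 1) \<and>
     (\<forall>(x, r)\<in>\<B>. \<forall>(y, s)\<in>\<B>. (x, r) \<noteq> (y, s) \<longrightarrow> ball x r \<inter> ball y s = {})"

definition ball_sum :: "(real^'d \<Rightarrow> real) \<Rightarrow> ((real^'d) \<times> real) set \<Rightarrow> real^'d \<Rightarrow> real" where
  "ball_sum \<phi> \<B> = (\<lambda>y. \<Sum>(x, r)\<in>\<B>. phi_xr \<phi> x r y)"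

end

theory Submission
  imports Defs
begin

text \<open>
  Fix \<open>t > 0\<close>, put \<open>\<sigma> = t^(p/(\<alpha>0-\<alpha>1))\<close> and split the family of balls at radius \<open>\<sigma>\<close>:
  the balls with \<open>r\<^sub>j < \<sigma>\<close> are estimated in \<open>X0\<close>, the others in \<open>X1\<close>. With \<open>\<alpha> = \<alpha>\<^sub>\<theta>\<close>
  this gives \<open>t^(-\<theta>) K(t, f) \<lesssim> G(\<sigma>)^(1/p)\<close>, where
  \<open>G(\<sigma>) = \<sigma>^(\<alpha>-\<alpha>0) \<Sum>{r\<^sub>j^\<alpha>0 | r\<^sub>j < \<sigma>} + \<sigma>^(\<alpha>-\<alpha>1) \<Sum>{r\<^sub>j^\<alpha>1 | r\<^sub>j \<ge> \<sigma>}\<close>;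
  this choice of \<open>\<sigma>\<close> turns the two weights into \<open>t^(-\<theta>)\<close> and \<open>t^(1-\<theta>)\<close>.

  Let \<open>m(u) = #{j | r\<^sub>j \<ge> u}\<close>. Since \<open>\<alpha>1 < \<alpha> - \<epsilon> < \<alpha> + \<epsilon> < \<alpha>0\<close> for small \<open>\<epsilon> > 0\<close>,
  layer-cake integration of the two sums gives
  \<open>G(\<sigma>) \<lesssim> sup\<^sub>u m(u) u^\<alpha> min(u/\<sigma>, \<sigma>/u)^\<epsilon>\<close>. As \<open>m\<close> is nonincreasing, the \<open>\<gamma>\<close>-th
  power of this supremum, \<open>\<gamma> = h/p\<close>, is \<open>\<lesssim>\<close>
  \<open>\<integral> min(u/\<sigma>, \<sigma>/u)^(\<epsilon>\<gamma>) (m(u) u^\<alpha>)^\<gamma> du/u\<close>. Integrating in \<open>t\<close> and exchanging the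
  integrals, the kernel contributes the finite factor \<open>\<integral> min(u/\<sigma>, \<sigma>/u)^(\<epsilon>\<gamma>) dt/t\<close>, so
  \<open>\<integral> (t^(-\<theta>) K(t, f))^h dt/t \<lesssim> \<integral> (m(u) u^\<alpha>)^\<gamma> du/u\<close>, which is \<open>1/q\<close> times the
  \<open>q\<close>-th power of the Lorentz quasi-norm of the radii, \<open>q = h\<alpha>/p\<close>.
\<close>

lemma nn_integral_powr_deriv:
  fixes s b \<beta> :: real
  assumes "0 \<le> s" "s \<le> b" "0 < \<beta>"
  shows "(\<integral>\<^sup>+x. ennreal (indicator {s..b} x * (\<beta> * x powr (\<beta> - 1))) \<partial>lborel)
       = ennreal (b powr \<beta> - s powr \<beta>)"
proof -
  have "((\<lambda>x. \<beta> * x powr (\<beta> - 1)) has_integral (b powr \<beta> - s powr \<beta>)) {s..b}"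
  proof (rule fundamental_theorem_of_calculus_interior)
    show "continuous_on {s..b} (\<lambda>x. x powr \<beta>)"
      using assms by (intro continuous_on_powr' continuous_intros) auto
    show "((\<lambda>x. x powr \<beta>) has_vector_derivative \<beta> * x powr (\<beta> - 1)) (at x)"
      if "x \<in> {s<..<b}" for x
      using that assms has_real_derivative_powr[of x \<beta>]
      by (simp add: has_real_derivative_iff_has_vector_derivative)
  qed (use assms in auto)
  then show ?thesis
    using assms by (intro nn_integral_has_integral_lebesgue) auto
qed

lemma nn_integral_powr_Icc_0:
  fixes T \<kappa> :: real
  assumes "0 \<le> T" "0 < \<kappa>"
  shows "(\<integral>\<^sup>+x. ennreal (indicator {0..T} x * x powr (\<kappa> - 1)) \<partial>lborel) = ennreal (T powr \<kappa> / \<kappa>)"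
proof -
  have "((\<lambda>x. x powr (\<kappa> - 1)) has_integral (T powr (\<kappa> - 1 + 1) / (\<kappa> - 1 + 1))) {0..T}"
    using assms by (intro has_integral_powr_from_0) auto
  then show ?thesis
    by (subst nn_integral_has_integral_lebesgue) auto
qed

lemma nn_integral_powr_Ici:
  fixes s \<kappa> :: real
  assumes "0 < s" "0 < \<kappa>"
  shows "(\<integral>\<^sup>+x. ennreal (indicator {s..} x * x powr (-\<kappa> - 1)) \<partial>lborel) = ennreal (s powr (-\<kappa>) / \<kappa>)"
proof -
  have "((\<lambda>x. x powr (-\<kappa> - 1)) has_integral (-(s powr (-\<kappa> - 1 + 1)) / (-\<kappa> - 1 + 1))) {s..}"
    using assms by (intro has_integral_powr_to_inf) auto
  then show ?thesis
    by (subst nn_integral_has_integral_lebesgue) auto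
qed

lemma distr_count_eq_sum_indicator:
  assumes "finite J"
  shows "real (distr_count J a t) = (\<Sum>j\<in>J. indicator {..\<bar>a j\<bar>} t)"
  using assms by (simp add: distr_count_def indicator_def sum.If_cases Int_def conj_commute)

lemma borel_measurable_distr_count [measurable]:
  "finite J \<Longrightarrow> (\<lambda>t. real (distr_count J a t)) \<in> borel_measurable borel"
  by (simp add: distr_count_eq_sum_indicator atMost_borel)

lemma distr_count_antimono:
  "finite J \<Longrightarrow> s \<le> t \<Longrightarrow> distr_count J a t \<le> distr_count J a s"
  unfolding distr_count_def by (rule card_mono) auto

lemma distr_count_subset:
  "finite J \<Longrightarrow> A \<subseteq> J \<Longrightarrow> distr_count A a t \<le> distr_count J a t"
  unfolding distr_count_def by (rule card_mono) auto

lemma distr_count_eq_0: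
  "(\<And>j. j \<in> J \<Longrightarrow> \<bar>a j\<bar> < t) \<Longrightarrow> distr_count J a t = 0"
  unfolding distr_count_def by (force simp: card_eq_0_iff)

lemma sum_powr_diff_eq_nn_integral_distr_count:
  fixes a :: "'j \<Rightarrow> real"
  assumes J: "finite J" and \<beta>: "0 < \<beta>" and s: "0 \<le> s" "\<forall>j\<in>J. s \<le> a j"
  shows "ennreal (\<Sum>j\<in>J. a j powr \<beta> - s powr \<beta>)
       = (\<integral>\<^sup>+x. ennreal (indicator {s..} x * (\<beta> * x powr (\<beta> - 1)) * distr_count J a x) \<partial>lborel)"
proof -
  have "ennreal (\<Sum>j\<in>J. a j powr \<beta> - s powr \<beta>) = (\<Sum>j\<in>J. ennreal (a j powr \<beta> - s powr \<beta>))"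
    using s \<beta> by (intro sum_ennreal[symmetric]) (auto intro: powr_mono2)
  also have "\<dots> = (\<Sum>j\<in>J. \<integral>\<^sup>+x. ennreal (indicator {s..a j} x * (\<beta> * x powr (\<beta> - 1))) \<partial>lborel)"
    using s \<beta> by (intro sum.cong refl nn_integral_powr_deriv[symmetric]) auto
  also have "\<dots> = (\<integral>\<^sup>+x. (\<Sum>j\<in>J. ennreal (indicator {s..a j} x * (\<beta> * x powr (\<beta> - 1)))) \<partial>lborel)"
    by (intro nn_integral_sum[symmetric]) auto
  also have "\<dots> = (\<integral>\<^sup>+x. ennreal (indicator {s..} x * (\<beta> * x powr (\<beta> - 1)) * distr_count J a x) \<partial>lborel)"
  proof (intro nn_integral_cong)
    fix x :: real
    have split_indicator: "indicator {s..a j} x = (indicator {s..} x * indicator {..\<bar>a j\<bar>} x :: real)" if "j \<in> J" for j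
      using that s by (auto simp: indicator_def)
    have "(\<Sum>j\<in>J. indicator {s..a j} x * (\<beta> * x powr (\<beta> - 1)))
             = (\<Sum>j\<in>J. indicator {..\<bar>a j\<bar>} x) * (indicator {s..} x * (\<beta> * x powr (\<beta> - 1)))"
      unfolding sum_distrib_right using split_indicator by (intro sum.cong refl) (simp add: mult_ac)
    then have "(\<Sum>j\<in>J. indicator {s..a j} x * (\<beta> * x powr (\<beta> - 1)))
             = indicator {s..} x * (\<beta> * x powr (\<beta> - 1)) * distr_count J a x"
      by (simp only: distr_count_eq_sum_indicator[OF J] mult_ac)
    moreover have "(\<Sum>j\<in>J. ennreal (indicator {s..a j} x * (\<beta> * x powr (\<beta> - 1))))
                 = ennreal (\<Sum>j\<in>J. indicator {s..a j} x * (\<beta> * x powr (\<beta> - 1)))"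
      using \<beta> by (intro sum_ennreal) auto
    ultimately show "(\<Sum>j\<in>J. ennreal (indicator {s..a j} x * (\<beta> * x powr (\<beta> - 1))))
        = ennreal (indicator {s..} x * (\<beta> * x powr (\<beta> - 1)) * distr_count J a x)"
      by simp
  qed
  finally show ?thesis .
qed

lemma sum_powr_below_le:
  fixes r :: "'j \<Rightarrow> real"
  assumes J: "finite J" "\<forall>j\<in>J. 0 \<le> r j \<and> r j < \<sigma>" and \<sigma>: "0 < \<sigma>"
    and \<beta>: "0 < \<beta>" "\<kappa> < \<beta>" and M: "0 \<le> M"
    and count: "\<And>x. 0 < x \<Longrightarrow> x < \<sigma> \<Longrightarrow> real (distr_count J r x) \<le> M * x powr (-\<kappa>)"
  shows "(\<Sum>j\<in>J. r j powr \<beta>) \<le> \<beta> / (\<beta> - \<kappa>) * M * \<sigma> powr (\<beta> - \<kappa>)"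
proof -
  have "ennreal (\<Sum>j\<in>J. r j powr \<beta>)
      = (\<integral>\<^sup>+x. ennreal (indicator {0..} x * (\<beta> * x powr (\<beta> - 1)) * distr_count J r x) \<partial>lborel)"
    using sum_powr_diff_eq_nn_integral_distr_count[of J \<beta> 0 r] J \<beta> by auto
  also have "\<dots> \<le> (\<integral>\<^sup>+x. ennreal (\<beta> * M * (indicator {0..\<sigma>} x * x powr ((\<beta> - \<kappa>) - 1))) \<partial>lborel)"
  proof (intro nn_integral_mono ennreal_leI)
    fix x :: real
    consider "x \<le> 0" | "0 < x" "x < \<sigma>" | "\<sigma> \<le> x" by linarith
    then show "indicator {0..} x * (\<beta> * x powr (\<beta> - 1)) * distr_count J r x
             \<le> \<beta> * M * (indicator {0..\<sigma>} x * x powr ((\<beta> - \<kappa>) - 1))"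
    proof cases
      case 2
      then have "\<beta> * x powr (\<beta> - 1) * distr_count J r x \<le> \<beta> * x powr (\<beta> - 1) * (M * x powr (-\<kappa>))"
        using \<beta> count by (intro mult_left_mono) auto
      also have "\<dots> = \<beta> * M * x powr ((\<beta> - \<kappa>) - 1)"
        by (simp add: powr_add[symmetric] algebra_simps)
      finally show ?thesis using 2 by (simp add: indicator_def)
    next
      case 3
      then have "distr_count J r x = 0"
        using J by (intro distr_count_eq_0) force
      then show ?thesis using 3 \<beta> M by (auto simp: indicator_def)
    qed (use \<beta> M in \<open>auto simp: indicator_def\<close>)
  qed
  also have "\<dots> = ennreal (\<beta> * M) * (\<integral>\<^sup>+x. ennreal (indicator {0..\<sigma>} x * x powr ((\<beta> - \<kappa>) - 1)) \<partial>lborel)"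
    using \<beta> M by (subst nn_integral_cmult[symmetric]) (auto simp: ennreal_mult)
  also have "\<dots> = ennreal (\<beta> / (\<beta> - \<kappa>) * M * \<sigma> powr (\<beta> - \<kappa>))"
    using \<beta> M \<sigma> by (simp add: nn_integral_powr_Icc_0 ennreal_mult[symmetric])
  finally show ?thesis
    using \<beta> M by (simp add: ennreal_le_iff)
qed

lemma sum_powr_diff_above_le:
  fixes r :: "'j \<Rightarrow> real"
  assumes J: "finite J" "\<forall>j\<in>J. \<sigma> \<le> r j" and \<sigma>: "0 < \<sigma>" and \<beta>: "0 < \<beta>" "\<beta> < \<kappa>" and M: "0 \<le> M"
    and count: "\<And>x. \<sigma> \<le> x \<Longrightarrow> real (distr_count J r x) \<le> M * x powr (-\<kappa>)"
  shows "(\<Sum>j\<in>J. r j powr \<beta> - \<sigma> powr \<beta>) \<le> \<beta> / (\<kappa> - \<beta>) * M * \<sigma> powr (\<beta> - \<kappa>)"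
proof -
  have "ennreal (\<Sum>j\<in>J. r j powr \<beta> - \<sigma> powr \<beta>)
      = (\<integral>\<^sup>+x. ennreal (indicator {\<sigma>..} x * (\<beta> * x powr (\<beta> - 1)) * distr_count J r x) \<partial>lborel)"
    using J \<sigma> \<beta> by (intro sum_powr_diff_eq_nn_integral_distr_count) auto
  also have "\<dots> \<le> (\<integral>\<^sup>+x. ennreal (\<beta> * M * (indicator {\<sigma>..} x * x powr (-(\<kappa> - \<beta>) - 1))) \<partial>lborel)"
  proof (intro nn_integral_mono ennreal_leI)
    fix x :: real
    show "indicator {\<sigma>..} x * (\<beta> * x powr (\<beta> - 1)) * distr_count J r x
        \<le> \<beta> * M * (indicator {\<sigma>..} x * x powr (-(\<kappa> - \<beta>) - 1))"
    proof (cases "\<sigma> \<le> x")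
      case True
      then have "\<beta> * x powr (\<beta> - 1) * distr_count J r x \<le> \<beta> * x powr (\<beta> - 1) * (M * x powr (-\<kappa>))"
        using \<beta> count by (intro mult_left_mono) auto
      also have "\<dots> = \<beta> * M * x powr (-(\<kappa> - \<beta>) - 1)"
        by (simp add: powr_add[symmetric] algebra_simps)
      finally show ?thesis using True by (simp add: indicator_def)
    qed (use \<beta> M in \<open>auto simp: indicator_def\<close>)
  qed
  also have "\<dots> = ennreal (\<beta> * M) * (\<integral>\<^sup>+x. ennreal (indicator {\<sigma>..} x * x powr (-(\<kappa> - \<beta>) - 1)) \<partial>lborel)"
    using \<beta> M by (subst nn_integral_cmult[symmetric]) (auto simp: ennreal_mult)
  also have "\<dots> = ennreal (\<beta> / (\<kappa> - \<beta>) * M * \<sigma> powr (\<beta> - \<kappa>))"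
    using nn_integral_powr_Ici[of \<sigma> "\<kappa> - \<beta>"] \<beta> M \<sigma>
    by (simp add: ennreal_mult[symmetric] powr_minus_divide)
  finally show ?thesis
    using \<beta> M by (simp add: ennreal_le_iff)
qed

lemma sum_powr_above_le:
  fixes r :: "'j \<Rightarrow> real"
  assumes J: "finite J" "\<forall>j\<in>J. \<sigma> \<le> r j" and \<sigma>: "0 < \<sigma>" and \<kappa>: "\<beta> < \<kappa>" and M: "0 \<le> M"
    and count: "\<And>x. \<sigma> \<le> x \<Longrightarrow> real (distr_count J r x) \<le> M * x powr (-\<kappa>)"
  shows "(\<Sum>j\<in>J. r j powr \<beta>) \<le> (1 + max \<beta> 0 / (\<kappa> - \<beta>)) * M * \<sigma> powr (\<beta> - \<kappa>)"
proof -
  have "card J = distr_count J r \<sigma>"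
    unfolding distr_count_def using J \<sigma> by (intro arg_cong[where f = card]) force
  then have "real (card J) * \<sigma> powr \<beta> \<le> M * \<sigma> powr (-\<kappa>) * \<sigma> powr \<beta>"
    using count[of \<sigma>] by (intro mult_right_mono) auto
  then have card_J: "real (card J) * \<sigma> powr \<beta> \<le> M * \<sigma> powr (\<beta> - \<kappa>)"
    by (simp add: powr_add[symmetric] mult.assoc)
  show ?thesis
  proof (cases "\<beta> \<le> 0")
    case True
    have "(\<Sum>j\<in>J. r j powr \<beta>) \<le> (\<Sum>j\<in>J. \<sigma> powr \<beta>)"
      using J True \<sigma> by (intro sum_mono powr_mono2') auto
    then show ?thesis using card_J True by simp
  next
    case False
    then have "(\<Sum>j\<in>J. r j powr \<beta> - \<sigma> powr \<beta>) \<le> \<beta> / (\<kappa> - \<beta>) * M * \<sigma> powr (\<beta> - \<kappa>)"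
      using J \<sigma> \<kappa> M count by (intro sum_powr_diff_above_le) auto
    then show ?thesis using card_J False by (simp add: sum_subtractf algebra_simps)
  qed
qed

definition lorentz_profile :: "real \<Rightarrow> 'j set \<Rightarrow> ('j \<Rightarrow> real) \<Rightarrow> real \<Rightarrow> real" where
  "lorentz_profile \<alpha> J a t = real (distr_count J a t) * t powr \<alpha>"

lemma lorentz_profile_nonneg: "0 \<le> lorentz_profile \<alpha> J a t"
  by (simp add: lorentz_profile_def)

lemma borel_measurable_lorentz_profile [measurable]:
  "finite J \<Longrightarrow> lorentz_profile \<alpha> J a \<in> borel_measurable borel"
  unfolding lorentz_profile_def[abs_def] by measurable

lemma distr_count_le_of_lorentz_profile_le:
  fixes r :: "'j \<Rightarrow> real"
  assumes \<sigma>: "0 < \<sigma>" and x: "0 < x"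
    and profile: "lorentz_profile \<alpha> J r x * min (x / \<sigma>) (\<sigma> / x) powr \<epsilon> \<le> L"
  shows "x < \<sigma> \<Longrightarrow> real (distr_count J r x) \<le> L * \<sigma> powr \<epsilon> * x powr (-(\<alpha> + \<epsilon>))"
    and "\<sigma> \<le> x \<Longrightarrow> real (distr_count J r x) \<le> L * \<sigma> powr (-\<epsilon>) * x powr (-(\<alpha> - \<epsilon>))"
proof -
  assume "x < \<sigma>"
  then have "min (x / \<sigma>) (\<sigma> / x) = x / \<sigma>"
    using x by (intro min_absorb1) (auto intro: order_trans[of _ 1])
  then have "real (distr_count J r x) * x powr (\<alpha> + \<epsilon>) / \<sigma> powr \<epsilon> \<le> L"
    using profile x \<sigma> by (simp add: lorentz_profile_def powr_divide powr_add mult_ac)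
  then have "real (distr_count J r x) * x powr (\<alpha> + \<epsilon>) \<le> L * \<sigma> powr \<epsilon>"
    using \<sigma> by (simp add: pos_divide_le_eq)
  then show "real (distr_count J r x) \<le> L * \<sigma> powr \<epsilon> * x powr (-(\<alpha> + \<epsilon>))"
    using x by (subst powr_minus_divide) (simp add: pos_le_divide_eq)
next
  assume "\<sigma> \<le> x"
  then have "min (x / \<sigma>) (\<sigma> / x) = \<sigma> / x"
    using \<sigma> by (intro min_absorb2) (auto intro: order_trans[of _ 1])
  then have "real (distr_count J r x) * x powr (\<alpha> - \<epsilon>) * \<sigma> powr \<epsilon> \<le> L"
    using profile x \<sigma> by (simp add: lorentz_profile_def powr_divide powr_diff mult_ac)
  then have "real (distr_count J r x) * x powr (\<alpha> - \<epsilon>) \<le> L * \<sigma> powr (-\<epsilon>)"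
    using \<sigma> by (subst powr_minus_divide) (simp add: pos_le_divide_eq)
  then show "real (distr_count J r x) \<le> L * \<sigma> powr (-\<epsilon>) * x powr (-(\<alpha> - \<epsilon>))"
    using x \<sigma> by (subst (2) powr_minus_divide) (simp add: pos_le_divide_eq)
qed

definition scale_split_sum :: "real \<Rightarrow> real \<Rightarrow> real \<Rightarrow> 'j set \<Rightarrow> ('j \<Rightarrow> real) \<Rightarrow> real \<Rightarrow> real" where
  "scale_split_sum \<alpha>0 \<alpha>1 \<alpha> J r \<sigma> =
     \<sigma> powr (\<alpha> - \<alpha>0) * (\<Sum>j\<in>{j\<in>J. r j < \<sigma>}. r j powr \<alpha>0)
   + \<sigma> powr (\<alpha> - \<alpha>1) * (\<Sum>j\<in>{j\<in>J. \<sigma> \<le> r j}. r j powr \<alpha>1)"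

lemma borel_measurable_scale_split_sum [measurable]:
  assumes "finite J"
  shows "scale_split_sum \<alpha>0 \<alpha>1 \<alpha> J r \<in> borel_measurable borel"
proof -
  have "scale_split_sum \<alpha>0 \<alpha>1 \<alpha> J r = (\<lambda>\<sigma>. \<sigma> powr (\<alpha> - \<alpha>0) * (\<Sum>j\<in>J. if r j < \<sigma> then r j powr \<alpha>0 else 0)
      + \<sigma> powr (\<alpha> - \<alpha>1) * (\<Sum>j\<in>J. if \<sigma> \<le> r j then r j powr \<alpha>1 else 0))"
    using assms by (simp add: scale_split_sum_def sum.inter_filter fun_eq_iff)
  then show ?thesis by simp
qed

lemma scale_split_sum_nonneg: "0 \<le> scale_split_sum \<alpha>0 \<alpha>1 \<alpha> J r \<sigma>"
  by (simp add: scale_split_sum_def sum_nonneg)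

lemma scale_split_sum_le:
  fixes r :: "'j \<Rightarrow> real"
  assumes J: "finite J" "\<forall>j\<in>J. 0 \<le> r j" and \<sigma>: "0 < \<sigma>" and \<alpha>: "0 < \<alpha>"
    and \<epsilon>: "0 < \<epsilon>" "\<alpha> + \<epsilon> < \<alpha>0" "\<alpha>1 < \<alpha> - \<epsilon>"
    and profile: "\<And>x. 0 < x \<Longrightarrow> lorentz_profile \<alpha> J r x * min (x / \<sigma>) (\<sigma> / x) powr \<epsilon> \<le> L"
  shows "scale_split_sum \<alpha>0 \<alpha>1 \<alpha> J r \<sigma> \<le> (\<alpha>0 / (\<alpha>0 - \<alpha> - \<epsilon>) + 1 + max \<alpha>1 0 / (\<alpha> - \<alpha>1 - \<epsilon>)) * L"
proof -
  let ?below = "{j\<in>J. r j < \<sigma>}" and ?above = "{j\<in>J. \<sigma> \<le> r j}"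
  have L: "0 \<le> L"
    using profile[OF \<sigma>] lorentz_profile_nonneg[of \<alpha> J r \<sigma>] by (meson order_trans mult_nonneg_nonneg powr_ge_zero)
  have count: "real (distr_count A r x) \<le> real (distr_count J r x)" if "A \<subseteq> J" for A x
    using distr_count_subset[OF J(1) that] by simp
  have "(\<Sum>j\<in>?below. r j powr \<alpha>0) \<le> \<alpha>0 / (\<alpha>0 - (\<alpha> + \<epsilon>)) * (L * \<sigma> powr \<epsilon>) * \<sigma> powr (\<alpha>0 - (\<alpha> + \<epsilon>))"
  proof (rule sum_powr_below_le)
    show "real (distr_count ?below r x) \<le> L * \<sigma> powr \<epsilon> * x powr (-(\<alpha> + \<epsilon>))" if "0 < x" "x < \<sigma>" for x
      using count[of ?below x] distr_count_le_of_lorentz_profile_le(1)[OF \<sigma> that(1) profile[OF that(1)] that(2)]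
      by simp
  qed (use J \<sigma> \<alpha> \<epsilon> L in auto)
  then have "\<sigma> powr (\<alpha> - \<alpha>0) * (\<Sum>j\<in>?below. r j powr \<alpha>0)
      \<le> \<sigma> powr (\<alpha> - \<alpha>0) * (\<alpha>0 / (\<alpha>0 - \<alpha> - \<epsilon>) * L * (\<sigma> powr \<epsilon> * \<sigma> powr (\<alpha>0 - (\<alpha> + \<epsilon>))))"
    by (intro mult_left_mono) (auto simp: diff_diff_eq mult_ac)
  also have "\<dots> = \<alpha>0 / (\<alpha>0 - \<alpha> - \<epsilon>) * L"
    using \<sigma> by (simp add: powr_add[symmetric])
  finally have below: "\<sigma> powr (\<alpha> - \<alpha>0) * (\<Sum>j\<in>?below. r j powr \<alpha>0) \<le> \<alpha>0 / (\<alpha>0 - \<alpha> - \<epsilon>) * L" .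
  have "(\<Sum>j\<in>?above. r j powr \<alpha>1)
      \<le> (1 + max \<alpha>1 0 / ((\<alpha> - \<epsilon>) - \<alpha>1)) * (L * \<sigma> powr (-\<epsilon>)) * \<sigma> powr (\<alpha>1 - (\<alpha> - \<epsilon>))"
  proof (rule sum_powr_above_le)
    show "real (distr_count ?above r x) \<le> L * \<sigma> powr (-\<epsilon>) * x powr (-(\<alpha> - \<epsilon>))" if "\<sigma> \<le> x" for x
      using that \<sigma> count[of ?above x] distr_count_le_of_lorentz_profile_le(2)[OF \<sigma> _ profile that]
      by simp
  qed (use J \<sigma> \<epsilon> L in auto)
  then have "\<sigma> powr (\<alpha> - \<alpha>1) * (\<Sum>j\<in>?above. r j powr \<alpha>1)
      \<le> \<sigma> powr (\<alpha> - \<alpha>1) * ((1 + max \<alpha>1 0 / (\<alpha> - \<alpha>1 - \<epsilon>)) * L * (\<sigma> powr (-\<epsilon>) * \<sigma> powr (\<alpha>1 - (\<alpha> - \<epsilon>))))"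
    by (intro mult_left_mono) (auto simp: algebra_simps)
  also have "\<dots> = (1 + max \<alpha>1 0 / (\<alpha> - \<alpha>1 - \<epsilon>)) * L"
    using \<sigma> by (simp add: powr_add[symmetric])
  finally show ?thesis
    using below by (simp add: scale_split_sum_def algebra_simps)
qed

lemma lorentz_profile_weighted_powr_le:
  fixes r :: "'j \<Rightarrow> real"
  assumes J: "finite J" and \<sigma>: "0 < \<sigma>" and u: "0 < u" "x \<le> 2 * u" "u \<le> x"
    and \<alpha>: "0 \<le> \<alpha>" and \<epsilon>: "0 \<le> \<epsilon>" and \<gamma>: "0 < \<gamma>"
  shows "(lorentz_profile \<alpha> J r x * min (x / \<sigma>) (\<sigma> / x) powr \<epsilon>) powr \<gamma>
       \<le> 2 powr ((\<alpha> + \<epsilon>) * \<gamma>) * (min (u / \<sigma>) (\<sigma> / u) powr (\<epsilon> * \<gamma>) * lorentz_profile \<alpha> J r u powr \<gamma>)"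
proof -
  have "x / \<sigma> \<le> 2 * (u / \<sigma>)" "\<sigma> / x \<le> 2 * (\<sigma> / u)"
    using u \<sigma> by (auto simp: field_simps intro: order_trans[OF _ mult_left_mono])
  then have "min (x / \<sigma>) (\<sigma> / x) \<le> 2 * min (u / \<sigma>) (\<sigma> / u)"
    by (simp add: min_def)
  then have w: "min (x / \<sigma>) (\<sigma> / x) powr \<epsilon> \<le> 2 powr \<epsilon> * min (u / \<sigma>) (\<sigma> / u) powr \<epsilon>"
    using u \<sigma> \<epsilon> by (subst powr_mult[symmetric]) (auto intro: powr_mono2)
  have "real (distr_count J r x) * x powr \<alpha> \<le> real (distr_count J r u) * (2 * u) powr \<alpha>"
    using u \<alpha> distr_count_antimono[OF J, of u x r] by (intro mult_mono powr_mono2) auto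
  then have H: "lorentz_profile \<alpha> J r x \<le> 2 powr \<alpha> * lorentz_profile \<alpha> J r u"
    using u by (simp add: lorentz_profile_def powr_mult mult_ac)
  have "lorentz_profile \<alpha> J r x * min (x / \<sigma>) (\<sigma> / x) powr \<epsilon>
      \<le> 2 powr (\<alpha> + \<epsilon>) * (lorentz_profile \<alpha> J r u * min (u / \<sigma>) (\<sigma> / u) powr \<epsilon>)"
    using mult_mono[OF H w] by (simp add: lorentz_profile_nonneg powr_add mult_ac)
  then have "(lorentz_profile \<alpha> J r x * min (x / \<sigma>) (\<sigma> / x) powr \<epsilon>) powr \<gamma>
      \<le> (2 powr (\<alpha> + \<epsilon>) * (lorentz_profile \<alpha> J r u * min (u / \<sigma>) (\<sigma> / u) powr \<epsilon>)) powr \<gamma>"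
    using \<gamma> by (intro powr_mono2) (auto simp: lorentz_profile_nonneg)
  also have "\<dots> = 2 powr ((\<alpha> + \<epsilon>) * \<gamma>) * (min (u / \<sigma>) (\<sigma> / u) powr (\<epsilon> * \<gamma>) * lorentz_profile \<alpha> J r u powr \<gamma>)"
    by (simp add: powr_mult powr_powr lorentz_profile_nonneg mult_ac)
  finally show ?thesis .
qed

text \<open>As \<open>distr_count\<close> is antitone, the value at \<open>x\<close> is dominated by the average over \<open>[x/2, x]\<close>.\<close>

lemma lorentz_profile_weighted_powr_le_nn_integral:
  fixes r :: "'j \<Rightarrow> real"
  assumes J: "finite J" and \<sigma>: "0 < \<sigma>" and x: "0 < x" and \<alpha>: "0 \<le> \<alpha>" and \<epsilon>: "0 \<le> \<epsilon>" and \<gamma>: "0 < \<gamma>"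
  shows "ennreal ((lorentz_profile \<alpha> J r x * min (x / \<sigma>) (\<sigma> / x) powr \<epsilon>) powr \<gamma>)
       \<le> ennreal (2 powr ((\<alpha> + \<epsilon>) * \<gamma> + 1)) *
         (\<integral>\<^sup>+u\<in>{0<..}. ennreal (min (u / \<sigma>) (\<sigma> / u) powr (\<epsilon> * \<gamma>)) * ennreal (lorentz_profile \<alpha> J r u powr \<gamma> / u) \<partial>lborel)"
    (is "ennreal ?P \<le> ennreal ?c * ?I")
proof -
  have "ennreal (?P / 2) = (\<integral>\<^sup>+u. ennreal (?P / x) * indicator {x/2..x} u \<partial>lborel)"
    using x by (simp add: nn_integral_cmult_indicator ennreal_mult[symmetric])
  also have "\<dots> \<le> (\<integral>\<^sup>+u. ennreal (2 powr ((\<alpha> + \<epsilon>) * \<gamma>)) * (ennreal (min (u / \<sigma>) (\<sigma> / u) powr (\<epsilon> * \<gamma>))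
                        * ennreal (lorentz_profile \<alpha> J r u powr \<gamma> / u) * indicator {0<..} u) \<partial>lborel)"
  proof (intro nn_integral_mono)
    fix u :: real
    show "ennreal (?P / x) * indicator {x/2..x} u \<le> ennreal (2 powr ((\<alpha> + \<epsilon>) * \<gamma>)) *
        (ennreal (min (u / \<sigma>) (\<sigma> / u) powr (\<epsilon> * \<gamma>)) * ennreal (lorentz_profile \<alpha> J r u powr \<gamma> / u) * indicator {0<..} u)"
    proof (cases "u \<in> {x/2..x}")
      case True
      then have u: "0 < u" "x \<le> 2 * u" "u \<le> x" using x by auto
      have "?P / x \<le> ?P / u"
        using u by (intro divide_left_mono) auto
      also have "\<dots> \<le> 2 powr ((\<alpha> + \<epsilon>) * \<gamma>) * (min (u / \<sigma>) (\<sigma> / u) powr (\<epsilon> * \<gamma>) * lorentz_profile \<alpha> J r u powr \<gamma>) / u"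
        using u by (intro divide_right_mono lorentz_profile_weighted_powr_le J \<sigma> \<alpha> \<epsilon> \<gamma>) auto
      finally show ?thesis
        using u by (simp add: ennreal_mult[symmetric] lorentz_profile_nonneg ennreal_leI)
    qed simp
  qed
  also have "\<dots> = ennreal (2 powr ((\<alpha> + \<epsilon>) * \<gamma>)) * ?I"
    using J by (intro nn_integral_cmult) measurable
  finally have half: "ennreal (?P / 2) \<le> ennreal (2 powr ((\<alpha> + \<epsilon>) * \<gamma>)) * ?I" .
  have "ennreal ?P = 2 * ennreal (?P / 2)"
    using ennreal_mult[of 2 "?P / 2"] by simp
  also have "\<dots> \<le> 2 * (ennreal (2 powr ((\<alpha> + \<epsilon>) * \<gamma>)) * ?I)"
    using half by (rule mult_left_mono) simp
  also have "\<dots> = ennreal ?c * ?I"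
    by (simp add: powr_add ennreal_mult mult_ac)
  finally show ?thesis .
qed

lemma nn_integral_scale_kernel_le:
  fixes c e u :: real
  assumes c: "0 < c" and e: "0 < e" and u: "0 < u"
  shows "(\<integral>\<^sup>+t\<in>{0<..}. ennreal (min (u / t powr c) (t powr c / u) powr e / t) \<partial>lborel) \<le> ennreal (2 / (c * e))"
proof -
  define T where "T = u powr (1 / c)"
  have T: "0 < T" "T powr (c * e) = u powr e" using u c by (auto simp: T_def powr_powr)
  have pointwise: "ennreal (min (u / t powr c) (t powr c / u) powr e / t) * indicator {0<..} t
      \<le> ennreal (u powr (-e)) * ennreal (indicator {0..T} t * t powr (c * e - 1))
        + ennreal (u powr e) * ennreal (indicator {T..} t * t powr (-(c * e) - 1))" for t
  proof (cases "0 < t")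
    case t: True
    have "min (u / t powr c) (t powr c / u) powr e / t \<le> (t powr c / u) powr e / t"
      and "min (u / t powr c) (t powr c / u) powr e / t \<le> (u / t powr c) powr e / t"
      using t u e by (auto intro!: divide_right_mono powr_mono2)
    moreover have "(t powr c / u) powr e / t = u powr (-e) * t powr (c * e - 1)"
      and "(u / t powr c) powr e / t = u powr e * t powr (-(c * e) - 1)"
      using t u by (simp_all add: powr_divide powr_powr powr_diff powr_minus_divide powr_add)
    ultimately have "min (u / t powr c) (t powr c / u) powr e / t
        \<le> u powr (-e) * (indicator {0..T} t * t powr (c * e - 1))
          + u powr e * (indicator {T..} t * t powr (-(c * e) - 1))"
      using t by (cases "t \<le> T") (auto simp: indicator_def intro: add_increasing2)
    then show ?thesis
      using t by (simp add: ennreal_mult[symmetric] ennreal_plus[symmetric] ennreal_leI del: ennreal_plus)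
  qed simp
  have "(\<integral>\<^sup>+t\<in>{0<..}. ennreal (min (u / t powr c) (t powr c / u) powr e / t) \<partial>lborel)
      \<le> (\<integral>\<^sup>+t. ennreal (u powr (-e)) * ennreal (indicator {0..T} t * t powr (c * e - 1))
              + ennreal (u powr e) * ennreal (indicator {T..} t * t powr (-(c * e) - 1)) \<partial>lborel)"
    by (intro nn_integral_mono pointwise)
  also have "\<dots> = ennreal (u powr (-e)) * (\<integral>\<^sup>+t. ennreal (indicator {0..T} t * t powr (c * e - 1)) \<partial>lborel)
        + ennreal (u powr e) * (\<integral>\<^sup>+t. ennreal (indicator {T..} t * t powr (-(c * e) - 1)) \<partial>lborel)"
    by (simp add: nn_integral_add nn_integral_cmult)
  also have "\<dots> = ennreal (u powr (-e)) * ennreal (T powr (c * e) / (c * e))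
      + ennreal (u powr e) * ennreal (T powr (-(c * e)) / (c * e))"
    using T c e by (simp only: nn_integral_powr_Icc_0 nn_integral_powr_Ici mult_pos_pos less_imp_le)
  also have "\<dots> = ennreal (2 / (c * e))"
    using T u c e by (simp add: powr_minus_divide ennreal_mult[symmetric] ennreal_plus[symmetric] del: ennreal_plus)
  finally show ?thesis .
qed

lemma scale_split_sum_powr_le_nn_integral:
  fixes r :: "'j \<Rightarrow> real"
  assumes J: "finite J" "\<forall>j\<in>J. 0 \<le> r j" and \<sigma>: "0 < \<sigma>" and \<alpha>: "0 < \<alpha>"
    and \<epsilon>: "0 < \<epsilon>" "\<alpha> + \<epsilon> < \<alpha>0" "\<alpha>1 < \<alpha> - \<epsilon>" and \<gamma>: "0 < \<gamma>"
  defines "K \<equiv> \<alpha>0 / (\<alpha>0 - \<alpha> - \<epsilon>) + 1 + max \<alpha>1 0 / (\<alpha> - \<alpha>1 - \<epsilon>)"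
  shows "ennreal (scale_split_sum \<alpha>0 \<alpha>1 \<alpha> J r \<sigma> powr \<gamma>)
       \<le> ennreal (K powr \<gamma> * 2 powr ((\<alpha> + \<epsilon>) * \<gamma> + 1)) *
         (\<integral>\<^sup>+u\<in>{0<..}. ennreal (min (u / \<sigma>) (\<sigma> / u) powr (\<epsilon> * \<gamma>)) * ennreal (lorentz_profile \<alpha> J r u powr \<gamma> / u) \<partial>lborel)"
    (is "_ \<le> ennreal (K powr \<gamma> * ?c) * ?I")
proof -
  have K: "0 < K" using \<alpha> \<epsilon> by (simp add: K_def add_pos_nonneg)
  show ?thesis
  proof (cases "?I = \<infinity>")
    case True
    then show ?thesis using K by (simp add: ennreal_mult_top)
  next
    case False
    then obtain I where I: "?I = ennreal I" "0 \<le> I"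
      using ennreal_cases[of ?I] by auto
    define L where "L = (?c * I) powr (1 / \<gamma>)"
    have "lorentz_profile \<alpha> J r x * min (x / \<sigma>) (\<sigma> / x) powr \<epsilon> \<le> L" if x: "0 < x" for x
    proof -
      have "ennreal ((lorentz_profile \<alpha> J r x * min (x / \<sigma>) (\<sigma> / x) powr \<epsilon>) powr \<gamma>) \<le> ennreal ?c * ?I"
        using \<alpha> \<epsilon> by (intro lorentz_profile_weighted_powr_le_nn_integral J(1) \<sigma> x \<gamma>) auto
      then have "ennreal ((lorentz_profile \<alpha> J r x * min (x / \<sigma>) (\<sigma> / x) powr \<epsilon>) powr \<gamma>) \<le> ennreal (?c * I)"
        using I by (simp add: ennreal_mult)
      then have "(lorentz_profile \<alpha> J r x * min (x / \<sigma>) (\<sigma> / x) powr \<epsilon>) powr \<gamma> \<le> ?c * I"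
        using I by (simp add: ennreal_le_iff)
      then have "((lorentz_profile \<alpha> J r x * min (x / \<sigma>) (\<sigma> / x) powr \<epsilon>) powr \<gamma>) powr (1 / \<gamma>) \<le> L"
        unfolding L_def using \<gamma> by (intro powr_mono2) auto
      then show ?thesis
        using \<gamma> by (simp add: powr_powr lorentz_profile_nonneg)
    qed
    then have "scale_split_sum \<alpha>0 \<alpha>1 \<alpha> J r \<sigma> \<le> K * L"
      unfolding K_def by (intro scale_split_sum_le J \<sigma> \<alpha> \<epsilon>)
    then have "scale_split_sum \<alpha>0 \<alpha>1 \<alpha> J r \<sigma> powr \<gamma> \<le> (K * L) powr \<gamma>"
      using \<gamma> by (intro powr_mono2) (auto simp: scale_split_sum_nonneg)
    also have "\<dots> = K powr \<gamma> * ?c * I"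
      using K I \<gamma> by (simp add: L_def powr_mult powr_powr)
    finally show ?thesis
      using K I by (simp add: ennreal_mult[symmetric] ennreal_leI)
  qed
qed

lemma nn_integral_scale_kernel_mult_le:
  fixes f :: "real \<Rightarrow> ennreal"
  assumes c: "0 < c" and e: "0 < e" and f [measurable]: "f \<in> borel_measurable borel"
  shows "(\<integral>\<^sup>+t\<in>{0<..}. ennreal (1 / t) *
            (\<integral>\<^sup>+u\<in>{0<..}. ennreal (min (u / t powr c) (t powr c / u) powr e) * f u \<partial>lborel) \<partial>lborel)
       \<le> ennreal (2 / (c * e)) * (\<integral>\<^sup>+u\<in>{0<..}. f u \<partial>lborel)"
proof -
  define kernel where "kernel t u = ennreal (min (u / t powr c) (t powr c / u) powr e / t) * indicator {0<..} t"
    for t u :: real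
  have "(\<integral>\<^sup>+t\<in>{0<..}. ennreal (1 / t) *
            (\<integral>\<^sup>+u\<in>{0<..}. ennreal (min (u / t powr c) (t powr c / u) powr e) * f u \<partial>lborel) \<partial>lborel)
      = (\<integral>\<^sup>+t. (\<integral>\<^sup>+u. kernel t u * (f u * indicator {0<..} u) \<partial>lborel) \<partial>lborel)"
    by (intro nn_integral_cong)
      (auto simp: kernel_def nn_integral_cmult[symmetric] indicator_def ennreal_mult[symmetric] mult_ac intro!: nn_integral_cong)
  also have "\<dots> = (\<integral>\<^sup>+u. (\<integral>\<^sup>+t. kernel t u \<partial>lborel) * (f u * indicator {0<..} u) \<partial>lborel)"
    by (auto simp: kernel_def lborel_pair.Fubini'[symmetric] nn_integral_multc)
  also have "\<dots> \<le> (\<integral>\<^sup>+u. ennreal (2 / (c * e)) * (f u * indicator {0<..} u) \<partial>lborel)"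
  proof (intro nn_integral_mono)
    fix u :: real
    show "(\<integral>\<^sup>+t. kernel t u \<partial>lborel) * (f u * indicator {0<..} u) \<le> ennreal (2 / (c * e)) * (f u * indicator {0<..} u)"
    proof (cases "0 < u")
      case True
      then have "(\<integral>\<^sup>+t. kernel t u \<partial>lborel) \<le> ennreal (2 / (c * e))"
        unfolding kernel_def using c e by (intro nn_integral_scale_kernel_le)
      then show ?thesis by (rule mult_right_mono) simp
    qed simp
  qed
  also have "\<dots> = ennreal (2 / (c * e)) * (\<integral>\<^sup>+u\<in>{0<..}. f u \<partial>lborel)"
    by (simp add: nn_integral_cmult)
  finally show ?thesis .
qed

lemma nn_integral_scale_split_sum_le:
  fixes r :: "'j \<Rightarrow> real"
  assumes J: "finite J" "\<forall>j\<in>J. 0 \<le> r j" and \<alpha>: "0 < \<alpha>"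
    and \<epsilon>: "0 < \<epsilon>" "\<alpha> + \<epsilon> < \<alpha>0" "\<alpha>1 < \<alpha> - \<epsilon>" and \<gamma>: "0 < \<gamma>" and c: "0 < c"
  defines "K \<equiv> \<alpha>0 / (\<alpha>0 - \<alpha> - \<epsilon>) + 1 + max \<alpha>1 0 / (\<alpha> - \<alpha>1 - \<epsilon>)"
  shows "(\<integral>\<^sup>+t\<in>{0<..}. ennreal (scale_split_sum \<alpha>0 \<alpha>1 \<alpha> J r (t powr c) powr \<gamma> / t) \<partial>lborel)
       \<le> ennreal (K powr \<gamma> * 2 powr ((\<alpha> + \<epsilon>) * \<gamma> + 1) * (2 / (c * (\<epsilon> * \<gamma>)))) *
         (\<integral>\<^sup>+u\<in>{0<..}. ennreal (lorentz_profile \<alpha> J r u powr \<gamma> / u) \<partial>lborel)"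
proof -
  define C where "C = K powr \<gamma> * 2 powr ((\<alpha> + \<epsilon>) * \<gamma> + 1)"
  define D where "D = 2 / (c * (\<epsilon> * \<gamma>))"
  have C: "0 \<le> C" and D: "0 \<le> D" using c \<epsilon> \<gamma> by (simp_all add: C_def D_def)
  let ?H = "\<lambda>u. ennreal (lorentz_profile \<alpha> J r u powr \<gamma> / u)"
  have "(\<integral>\<^sup>+t\<in>{0<..}. ennreal (scale_split_sum \<alpha>0 \<alpha>1 \<alpha> J r (t powr c) powr \<gamma> / t) \<partial>lborel)
      \<le> (\<integral>\<^sup>+t\<in>{0<..}. ennreal C * (ennreal (1 / t) *
            (\<integral>\<^sup>+u\<in>{0<..}. ennreal (min (u / t powr c) (t powr c / u) powr (\<epsilon> * \<gamma>)) * ?H u \<partial>lborel)) \<partial>lborel)"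
  proof (intro nn_integral_mono)
    fix t :: real
    have "ennreal (scale_split_sum \<alpha>0 \<alpha>1 \<alpha> J r (t powr c) powr \<gamma> / t)
        \<le> ennreal (1 / t) * (ennreal C *
            (\<integral>\<^sup>+u\<in>{0<..}. ennreal (min (u / t powr c) (t powr c / u) powr (\<epsilon> * \<gamma>)) * ?H u \<partial>lborel))"
      if t: "0 < t"
    proof -
      have "ennreal (scale_split_sum \<alpha>0 \<alpha>1 \<alpha> J r (t powr c) powr \<gamma> / t)
          = ennreal (1 / t) * ennreal (scale_split_sum \<alpha>0 \<alpha>1 \<alpha> J r (t powr c) powr \<gamma>)"
        using t by (simp add: ennreal_mult[symmetric])
      then show ?thesis
        unfolding C_def K_def using t \<alpha> \<epsilon> \<gamma>
        by (auto intro!: mult_left_mono scale_split_sum_powr_le_nn_integral J)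
    qed
    then show "ennreal (scale_split_sum \<alpha>0 \<alpha>1 \<alpha> J r (t powr c) powr \<gamma> / t) * indicator {0<..} t
        \<le> ennreal C * (ennreal (1 / t) *
            (\<integral>\<^sup>+u\<in>{0<..}. ennreal (min (u / t powr c) (t powr c / u) powr (\<epsilon> * \<gamma>)) * ?H u \<partial>lborel)) * indicator {0<..} t"
      by (cases "0 < t") (auto simp: mult_ac)
  qed
  also have "\<dots> = ennreal C * (\<integral>\<^sup>+t\<in>{0<..}. ennreal (1 / t) *
            (\<integral>\<^sup>+u\<in>{0<..}. ennreal (min (u / t powr c) (t powr c / u) powr (\<epsilon> * \<gamma>)) * ?H u \<partial>lborel) \<partial>lborel)"
    using J by (simp add: nn_integral_cmult mult.assoc)
  also have "\<dots> \<le> ennreal C * (ennreal D * (\<integral>\<^sup>+u\<in>{0<..}. ?H u \<partial>lborel))"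
    unfolding D_def using J c \<epsilon> \<gamma> by (intro mult_left_mono nn_integral_scale_kernel_mult_le) auto
  finally show ?thesis
    using C D by (simp add: ennreal_mult mult.assoc flip: C_def D_def)
qed

lemma nn_integral_scale_split_sum_bound:
  assumes \<alpha>: "0 < \<alpha>" "\<alpha>1 < \<alpha>" "\<alpha> < \<alpha>0" and \<gamma>: "0 < \<gamma>" and c: "0 < c"
  shows "\<exists>D\<ge>0. \<forall>J (r :: 'j \<Rightarrow> real). finite J \<longrightarrow> (\<forall>j\<in>J. 0 \<le> r j) \<longrightarrow>
           (\<integral>\<^sup>+t\<in>{0<..}. ennreal (scale_split_sum \<alpha>0 \<alpha>1 \<alpha> J r (t powr c) powr \<gamma> / t) \<partial>lborel)
           \<le> ennreal D * (\<integral>\<^sup>+u\<in>{0<..}. ennreal (lorentz_profile \<alpha> J r u powr \<gamma> / u) \<partial>lborel)"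
proof -
  define \<epsilon> where "\<epsilon> = min (\<alpha>0 - \<alpha>) (\<alpha> - \<alpha>1) / 2"
  have \<epsilon>: "0 < \<epsilon>" "\<alpha> + \<epsilon> < \<alpha>0" "\<alpha>1 < \<alpha> - \<epsilon>"
    using \<alpha> by (auto simp: \<epsilon>_def min_def field_simps)
  define K where "K = \<alpha>0 / (\<alpha>0 - \<alpha> - \<epsilon>) + 1 + max \<alpha>1 0 / (\<alpha> - \<alpha>1 - \<epsilon>)"
  show ?thesis
    using nn_integral_scale_split_sum_le[OF _ _ \<alpha>(1) \<epsilon> \<gamma> c] \<epsilon> \<gamma> c
    by (intro exI[of _ "K powr \<gamma> * 2 powr ((\<alpha> + \<epsilon>) * \<gamma> + 1) * (2 / (c * (\<epsilon> * \<gamma>)))"])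
      (auto simp: K_def)
qed

lemma nn_integral_lorentz_profile_le:
  fixes a :: "'j \<Rightarrow> real"
  assumes J: "finite J" "\<forall>j\<in>J. \<bar>a j\<bar> < 1" and \<alpha>: "0 < \<alpha>" and \<gamma>: "0 < \<gamma>"
  shows "(\<integral>\<^sup>+u\<in>{0<..}. ennreal (lorentz_profile \<alpha> J a u powr \<gamma> / u) \<partial>lborel)
       \<le> ennreal (real (card J) powr \<gamma> / (\<alpha> * \<gamma>))"
proof -
  have "(\<integral>\<^sup>+u\<in>{0<..}. ennreal (lorentz_profile \<alpha> J a u powr \<gamma> / u) \<partial>lborel)
      \<le> (\<integral>\<^sup>+u. ennreal (real (card J) powr \<gamma>) * ennreal (indicator {0..1} u * u powr (\<alpha> * \<gamma> - 1)) \<partial>lborel)"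
  proof (intro nn_integral_mono)
    fix u :: real
    consider "u \<le> 0" | "0 < u" "u < 1" | "1 \<le> u" by linarith
    then show "ennreal (lorentz_profile \<alpha> J a u powr \<gamma> / u) * indicator {0<..} u
        \<le> ennreal (real (card J) powr \<gamma>) * ennreal (indicator {0..1} u * u powr (\<alpha> * \<gamma> - 1))"
    proof cases
      case 2
      have "distr_count J a u \<le> card J"
        unfolding distr_count_def using J by (intro card_mono) auto
      then have "lorentz_profile \<alpha> J a u \<le> real (card J) * u powr \<alpha>"
        by (simp add: lorentz_profile_def mult_right_mono)
      then have "lorentz_profile \<alpha> J a u powr \<gamma> \<le> (real (card J) * u powr \<alpha>) powr \<gamma>"
        using \<gamma> by (intro powr_mono2) (auto simp: lorentz_profile_nonneg)
      also have "\<dots> = real (card J) powr \<gamma> * (u powr (\<alpha> * \<gamma> - 1) * u)"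
        using 2 by (simp add: powr_mult powr_powr powr_diff)
      finally show ?thesis
        using 2 by (simp add: indicator_def ennreal_mult[symmetric] pos_divide_le_eq mult.assoc ennreal_leI)
    next
      case 3
      then have "distr_count J a u = 0"
        using J by (intro distr_count_eq_0) force
      then show ?thesis using 3 \<gamma> by (simp add: lorentz_profile_def)
    qed simp
  qed
  also have "\<dots> = ennreal (real (card J) powr \<gamma>) * ennreal (1 powr (\<alpha> * \<gamma>) / (\<alpha> * \<gamma>))"
    using \<alpha> \<gamma> by (simp add: nn_integral_cmult nn_integral_powr_Icc_0)
  also have "\<dots> = ennreal (real (card J) powr \<gamma> / (\<alpha> * \<gamma>))"
    using \<alpha> \<gamma> by (simp add: ennreal_mult[symmetric])
  finally show ?thesis .
qed

lemma Kfun_le: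
  assumes "banach_subspace X0 n0" "banach_subspace X1 n1" "a0 \<in> X0" "a1 \<in> X1" "0 \<le> t"
  shows "Kfun X0 n0 X1 n1 t (a0 + a1) \<le> n0 a0 + t * n1 a1"
    and "0 \<le> Kfun X0 n0 X1 n1 t (a0 + a1)"
proof -
  let ?S = "{n0 b0 + t * n1 b1 | b0 b1. b0 \<in> X0 \<and> b1 \<in> X1 \<and> a0 + a1 = b0 + b1}"
  have nonneg: "0 \<le> s" if "s \<in> ?S" for s
    using that assms by (force simp: banach_subspace_def)
  have mem: "n0 a0 + t * n1 a1 \<in> ?S" using assms by auto
  show "Kfun X0 n0 X1 n1 t (a0 + a1) \<le> n0 a0 + t * n1 a1"
    unfolding Kfun_def using nonneg by (intro cInf_lower[OF mem] bdd_belowI) blast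
  show "0 \<le> Kfun X0 n0 X1 n1 t (a0 + a1)"
    unfolding Kfun_def using mem nonneg by (intro cInf_greatest) auto
qed

lemma admissible_balls_subset:
  "admissible_balls B \<Longrightarrow> A \<subseteq> B \<Longrightarrow> admissible_balls A"
  unfolding admissible_balls_def by (blast intro: finite_subset)

lemma ball_sum_filter_split:
  assumes "finite B"
  shows "ball_sum \<phi> B = (\<lambda>y. ball_sum \<phi> {j\<in>B. P j} y + ball_sum \<phi> {j\<in>B. \<not> P j} y)"
proof
  fix y
  have B: "{j\<in>B. P j} \<union> {j\<in>B. \<not> P j} = B" by blast
  show "ball_sum \<phi> B y = ball_sum \<phi> {j\<in>B. P j} y + ball_sum \<phi> {j\<in>B. \<not> P j} y"
    using sum.union_disjoint[of "{j\<in>B. P j}" "{j\<in>B. \<not> P j}" "\<lambda>(x, r). phi_xr \<phi> x r y"] assms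
    unfolding B ball_sum_def by auto
qed

lemma Kfun_ball_sum_le:
  fixes emb :: "(real^'d \<Rightarrow> real) \<Rightarrow> 'v::real_vector"
  assumes X: "banach_subspace X0 n0" "banach_subspace X1 n1"
    and emb_add: "\<And>f g. emb (\<lambda>y. f y + g y) = emb f + emb g"
    and bound0: "\<And>B. admissible_balls B \<Longrightarrow>
           emb (ball_sum \<phi> B) \<in> X0 \<and> n0 (emb (ball_sum \<phi> B)) \<le> C * (\<Sum>(x, r)\<in>B. r powr \<alpha>0) powr (1 / p)"
    and bound1: "\<And>B. admissible_balls B \<Longrightarrow>
           emb (ball_sum \<phi> B) \<in> X1 \<and> n1 (emb (ball_sum \<phi> B)) \<le> C * (\<Sum>(x, r)\<in>B. r powr \<alpha>1) powr (1 / p)"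
    and B: "admissible_balls B" and t: "0 \<le> t"
  shows "Kfun X0 n0 X1 n1 t (emb (ball_sum \<phi> B))
           \<le> C * ((\<Sum>j\<in>{j\<in>B. snd j < \<sigma>}. snd j powr \<alpha>0) powr (1 / p)
                  + t * (\<Sum>j\<in>{j\<in>B. \<sigma> \<le> snd j}. snd j powr \<alpha>1) powr (1 / p))"
    and "0 \<le> Kfun X0 n0 X1 n1 t (emb (ball_sum \<phi> B))"
proof -
  let ?below = "{j\<in>B. snd j < \<sigma>}" and ?above = "{j\<in>B. \<sigma> \<le> snd j}"
  have split: "emb (ball_sum \<phi> B) = emb (ball_sum \<phi> ?below) + emb (ball_sum \<phi> ?above)"
    using B ball_sum_filter_split[of B \<phi> "\<lambda>j. snd j < \<sigma>"]
    by (simp add: admissible_balls_def not_less emb_add)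
  have below: "emb (ball_sum \<phi> ?below) \<in> X0"
      "n0 (emb (ball_sum \<phi> ?below)) \<le> C * (\<Sum>j\<in>?below. snd j powr \<alpha>0) powr (1 / p)"
    using bound0[OF admissible_balls_subset[OF B]] by (auto simp: split_def)
  have above: "emb (ball_sum \<phi> ?above) \<in> X1"
      "n1 (emb (ball_sum \<phi> ?above)) \<le> C * (\<Sum>j\<in>?above. snd j powr \<alpha>1) powr (1 / p)"
    using bound1[OF admissible_balls_subset[OF B]] by (auto simp: split_def)
  show "0 \<le> Kfun X0 n0 X1 n1 t (emb (ball_sum \<phi> B))"
    unfolding split using X below(1) above(1) t by (rule Kfun_le(2))
  have "Kfun X0 n0 X1 n1 t (emb (ball_sum \<phi> B))
      \<le> n0 (emb (ball_sum \<phi> ?below)) + t * n1 (emb (ball_sum \<phi> ?above))"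
    unfolding split using X below(1) above(1) t by (rule Kfun_le(1))
  also have "\<dots> \<le> C * (\<Sum>j\<in>?below. snd j powr \<alpha>0) powr (1 / p) + t * (C * (\<Sum>j\<in>?above. snd j powr \<alpha>1) powr (1 / p))"
    using below(2) above(2) t by (intro add_mono mult_left_mono) auto
  finally show "Kfun X0 n0 X1 n1 t (emb (ball_sum \<phi> B))
      \<le> C * ((\<Sum>j\<in>?below. snd j powr \<alpha>0) powr (1 / p) + t * (\<Sum>j\<in>?above. snd j powr \<alpha>1) powr (1 / p))"
    by (simp add: algebra_simps)
qed

lemma powr_balanced_split_le:
  fixes t S0 S1 p \<theta> \<alpha>0 \<alpha>1 :: real
  assumes t: "0 < t" and S: "0 \<le> S0" "0 \<le> S1" and p: "0 < p" and \<alpha>01: "\<alpha>1 < \<alpha>0"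
  defines "\<sigma> \<equiv> t powr (p / (\<alpha>0 - \<alpha>1))" and "\<alpha> \<equiv> (1 - \<theta>) * \<alpha>0 + \<theta> * \<alpha>1"
  shows "t powr (-\<theta>) * (S0 powr (1 / p) + t * S1 powr (1 / p))
       \<le> 2 * (\<sigma> powr (\<alpha> - \<alpha>0) * S0 + \<sigma> powr (\<alpha> - \<alpha>1) * S1) powr (1 / p)"
proof -
  define x0 where "x0 = \<sigma> powr (\<alpha> - \<alpha>0) * S0"
  define x1 where "x1 = \<sigma> powr (\<alpha> - \<alpha>1) * S1"
  have x: "0 \<le> x0" "0 \<le> x1" using S by (simp_all add: x0_def x1_def)
  have "p / (\<alpha>0 - \<alpha>1) * (\<alpha> - \<alpha>0) = -\<theta> * p" "p / (\<alpha>0 - \<alpha>1) * (\<alpha> - \<alpha>1) = (1 - \<theta>) * p"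
    using \<alpha>01 by (simp_all add: \<alpha>_def field_simps)
  then have "\<sigma> powr (\<alpha> - \<alpha>0) = (t powr (-\<theta>)) powr p" "\<sigma> powr (\<alpha> - \<alpha>1) = (t powr (1 - \<theta>)) powr p"
    by (simp_all add: \<sigma>_def powr_powr)
  then have "x0 powr (1 / p) = t powr (-\<theta>) * S0 powr (1 / p)"
      and "x1 powr (1 / p) = t powr (1 - \<theta>) * S1 powr (1 / p)"
    using S p by (simp_all add: x0_def x1_def powr_mult powr_powr)
  then have "t powr (-\<theta>) * (S0 powr (1 / p) + t * S1 powr (1 / p)) = x0 powr (1 / p) + x1 powr (1 / p)"
    using t by (simp add: powr_diff algebra_simps powr_minus_divide)
  also have "\<dots> \<le> 2 * (x0 + x1) powr (1 / p)"
  proof -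
    have "x0 powr (1 / p) \<le> (x0 + x1) powr (1 / p)" "x1 powr (1 / p) \<le> (x0 + x1) powr (1 / p)"
      using x p by (auto intro: powr_mono2)
    then show ?thesis by linarith
  qed
  finally show ?thesis by (simp add: x0_def x1_def)
qed

lemma nn_integral_Kfun_ball_sum_le:
  fixes emb :: "(real^'d \<Rightarrow> real) \<Rightarrow> 'v::real_vector" and \<theta> :: real
  assumes X: "banach_subspace X0 n0" "banach_subspace X1 n1"
    and emb_add: "\<And>f g. emb (\<lambda>y. f y + g y) = emb f + emb g"
    and bound0: "\<And>B. admissible_balls B \<Longrightarrow>
           emb (ball_sum \<phi> B) \<in> X0 \<and> n0 (emb (ball_sum \<phi> B)) \<le> C * (\<Sum>(x, r)\<in>B. r powr \<alpha>0) powr (1 / p)"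
    and bound1: "\<And>B. admissible_balls B \<Longrightarrow>
           emb (ball_sum \<phi> B) \<in> X1 \<and> n1 (emb (ball_sum \<phi> B)) \<le> C * (\<Sum>(x, r)\<in>B. r powr \<alpha>1) powr (1 / p)"
    and C: "0 \<le> C" and p: "0 < p" and h: "0 < h" and \<alpha>01: "\<alpha>1 < \<alpha>0" and B: "admissible_balls B"
  defines "\<alpha> \<equiv> (1 - \<theta>) * \<alpha>0 + \<theta> * \<alpha>1"
  shows "(\<integral>\<^sup>+t\<in>{0<..}. ennreal ((t powr (-\<theta>) * Kfun X0 n0 X1 n1 t (emb (ball_sum \<phi> B))) powr h / t) \<partial>lborel)
       \<le> ennreal ((2 * C) powr h) *
         (\<integral>\<^sup>+t\<in>{0<..}. ennreal (scale_split_sum \<alpha>0 \<alpha>1 \<alpha> B snd (t powr (p / (\<alpha>0 - \<alpha>1))) powr (h / p) / t) \<partial>lborel)"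
proof -
  let ?G = "\<lambda>t. scale_split_sum \<alpha>0 \<alpha>1 \<alpha> B snd (t powr (p / (\<alpha>0 - \<alpha>1)))"
  have "(t powr (-\<theta>) * Kfun X0 n0 X1 n1 t (emb (ball_sum \<phi> B))) powr h \<le> (2 * C) powr h * ?G t powr (h / p)"
    if t: "0 < t" for t
  proof -
    let ?\<sigma> = "t powr (p / (\<alpha>0 - \<alpha>1))"
    have "t powr (-\<theta>) * Kfun X0 n0 X1 n1 t (emb (ball_sum \<phi> B))
        \<le> t powr (-\<theta>) * (C * ((\<Sum>j\<in>{j\<in>B. snd j < ?\<sigma>}. snd j powr \<alpha>0) powr (1 / p)
                          + t * (\<Sum>j\<in>{j\<in>B. ?\<sigma> \<le> snd j}. snd j powr \<alpha>1) powr (1 / p)))"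
      using t by (intro mult_left_mono Kfun_ball_sum_le[OF X emb_add bound0 bound1 B]) auto
    also have "\<dots> \<le> C * (2 * ?G t powr (1 / p))"
      unfolding scale_split_sum_def mult.left_commute[of "t powr (-\<theta>)"] \<alpha>_def
      using t p \<alpha>01 C by (intro mult_left_mono powr_balanced_split_le) (auto intro: sum_nonneg)
    finally have "(t powr (-\<theta>) * Kfun X0 n0 X1 n1 t (emb (ball_sum \<phi> B))) powr h \<le> (2 * C * ?G t powr (1 / p)) powr h"
      using h t Kfun_ball_sum_le(2)[OF X emb_add bound0 bound1 B] by (intro powr_mono2) (auto simp: mult_ac)
    also have "\<dots> = (2 * C) powr h * ?G t powr (h / p)"
      using C by (simp add: powr_mult powr_powr scale_split_sum_nonneg)
    finally show ?thesis .
  qed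
  then have "(\<integral>\<^sup>+t\<in>{0<..}. ennreal ((t powr (-\<theta>) * Kfun X0 n0 X1 n1 t (emb (ball_sum \<phi> B))) powr h / t) \<partial>lborel)
      \<le> (\<integral>\<^sup>+t\<in>{0<..}. ennreal ((2 * C) powr h) * ennreal (?G t powr (h / p) / t) \<partial>lborel)"
    by (intro nn_integral_mono)
      (auto simp: indicator_def ennreal_mult[symmetric] divide_right_mono intro!: ennreal_leI)
  also have "\<dots> = ennreal ((2 * C) powr h) * (\<integral>\<^sup>+t\<in>{0<..}. ennreal (?G t powr (h / p) / t) \<partial>lborel)"
    using B by (simp add: admissible_balls_def nn_integral_cmult mult.assoc)
  finally show ?thesis .
qed

lemma nn_integral_Kfun_ball_sum_bound:
  fixes emb :: "(real^'d \<Rightarrow> real) \<Rightarrow> 'v::real_vector" and \<theta> :: real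
  assumes X: "banach_subspace X0 n0" "banach_subspace X1 n1"
    and emb_add: "\<And>f g. emb (\<lambda>y. f y + g y) = emb f + emb g"
    and hyp0: "\<exists>C. \<forall>B. admissible_balls B \<longrightarrow>
           emb (ball_sum \<phi> B) \<in> X0 \<and> n0 (emb (ball_sum \<phi> B)) \<le> C * (\<Sum>(x, r)\<in>B. r powr \<alpha>0) powr (1 / p)"
    and hyp1: "\<exists>C. \<forall>B. admissible_balls B \<longrightarrow>
           emb (ball_sum \<phi> B) \<in> X1 \<and> n1 (emb (ball_sum \<phi> B)) \<le> C * (\<Sum>(x, r)\<in>B. r powr \<alpha>1) powr (1 / p)"
    and p: "0 < p" and h: "0 < h" and \<alpha>01: "\<alpha>1 < \<alpha>0"
  shows "\<exists>C\<ge>0. \<forall>B. admissible_balls B \<longrightarrow>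
           (\<integral>\<^sup>+t\<in>{0<..}. ennreal ((t powr (-\<theta>) * Kfun X0 n0 X1 n1 t (emb (ball_sum \<phi> B))) powr h / t) \<partial>lborel)
           \<le> ennreal C * (\<integral>\<^sup>+t\<in>{0<..}. ennreal (scale_split_sum \<alpha>0 \<alpha>1 ((1 - \<theta>) * \<alpha>0 + \<theta> * \<alpha>1) B snd
                                            (t powr (p / (\<alpha>0 - \<alpha>1))) powr (h / p) / t) \<partial>lborel)"
proof -
  obtain C0 C1 where
    C0: "\<forall>B. admissible_balls B \<longrightarrow>
           emb (ball_sum \<phi> B) \<in> X0 \<and> n0 (emb (ball_sum \<phi> B)) \<le> C0 * (\<Sum>(x, r)\<in>B. r powr \<alpha>0) powr (1 / p)" and
    C1: "\<forall>B. admissible_balls B \<longrightarrow>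
           emb (ball_sum \<phi> B) \<in> X1 \<and> n1 (emb (ball_sum \<phi> B)) \<le> C1 * (\<Sum>(x, r)\<in>B. r powr \<alpha>1) powr (1 / p)"
    using hyp0 hyp1 by blast
  define C where "C = max (max C0 C1) 0"
  have C: "0 \<le> C" "C0 \<le> C" "C1 \<le> C" by (auto simp: C_def)
  have "emb (ball_sum \<phi> B) \<in> X0 \<and> n0 (emb (ball_sum \<phi> B)) \<le> C * (\<Sum>(x, r)\<in>B. r powr \<alpha>0) powr (1 / p)"
    and "emb (ball_sum \<phi> B) \<in> X1 \<and> n1 (emb (ball_sum \<phi> B)) \<le> C * (\<Sum>(x, r)\<in>B. r powr \<alpha>1) powr (1 / p)"
    if "admissible_balls B" for B
    using C0 C1 C that by (meson mult_right_mono order_trans powr_ge_zero)+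
  from nn_integral_Kfun_ball_sum_le[OF X emb_add this C(1) p h \<alpha>01] C(1) show ?thesis
    by (intro exI[of _ "(2 * C) powr h"]) auto
qed

lemma nn_integral_interp_ball_sum_le:
  fixes emb :: "(real^'d \<Rightarrow> real) \<Rightarrow> 'v::real_vector" and \<theta> :: real
  assumes X: "banach_subspace X0 n0" "banach_subspace X1 n1"
    and emb_add: "\<And>f g. emb (\<lambda>y. f y + g y) = emb f + emb g"
    and hyp0: "\<exists>C. \<forall>B. admissible_balls B \<longrightarrow>
           emb (ball_sum \<phi> B) \<in> X0 \<and> n0 (emb (ball_sum \<phi> B)) \<le> C * (\<Sum>(x, r)\<in>B. r powr \<alpha>0) powr (1 / p)"
    and hyp1: "\<exists>C. \<forall>B. admissible_balls B \<longrightarrow>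
           emb (ball_sum \<phi> B) \<in> X1 \<and> n1 (emb (ball_sum \<phi> B)) \<le> C * (\<Sum>(x, r)\<in>B. r powr \<alpha>1) powr (1 / p)"
    and p: "0 < p" and h: "0 < h" and \<alpha>01: "\<alpha>1 < \<alpha>0" and \<theta>: "0 < \<theta>" "\<theta> < 1"
    and \<alpha>: "0 < (1 - \<theta>) * \<alpha>0 + \<theta> * \<alpha>1"
  shows "\<exists>D\<ge>0. \<forall>B. admissible_balls B \<longrightarrow>
           (\<integral>\<^sup>+t\<in>{0<..}. ennreal ((t powr (-\<theta>) * Kfun X0 n0 X1 n1 t (emb (ball_sum \<phi> B))) powr h / t) \<partial>lborel)
           \<le> ennreal D * (\<integral>\<^sup>+u\<in>{0<..}. ennreal (lorentz_profile ((1 - \<theta>) * \<alpha>0 + \<theta> * \<alpha>1) B snd u powr (h / p) / u) \<partial>lborel)"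
proof -
  define \<alpha> where "\<alpha> = (1 - \<theta>) * \<alpha>0 + \<theta> * \<alpha>1"
  have "\<alpha>0 - \<alpha> = \<theta> * (\<alpha>0 - \<alpha>1)" "\<alpha> - \<alpha>1 = (1 - \<theta>) * (\<alpha>0 - \<alpha>1)"
    by (simp_all add: \<alpha>_def algebra_simps)
  moreover have "0 < \<theta> * (\<alpha>0 - \<alpha>1)" "0 < (1 - \<theta>) * (\<alpha>0 - \<alpha>1)"
    using \<theta> \<alpha>01 by simp_all
  ultimately have \<alpha>_between: "\<alpha>1 < \<alpha>" "\<alpha> < \<alpha>0"
    by simp_all
  obtain C where C: "0 \<le> C" and Kfun_bound: "\<And>B. admissible_balls B \<Longrightarrow>
      (\<integral>\<^sup>+t\<in>{0<..}. ennreal ((t powr (-\<theta>) * Kfun X0 n0 X1 n1 t (emb (ball_sum \<phi> B))) powr h / t) \<partial>lborel)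
      \<le> ennreal C * (\<integral>\<^sup>+t\<in>{0<..}. ennreal (scale_split_sum \<alpha>0 \<alpha>1 \<alpha> B snd (t powr (p / (\<alpha>0 - \<alpha>1))) powr (h / p) / t) \<partial>lborel)"
    using nn_integral_Kfun_ball_sum_bound[OF X emb_add hyp0 hyp1 p h \<alpha>01, of \<theta>] by (auto simp: \<alpha>_def)
  obtain D where D: "0 \<le> D" and split_bound: "\<And>J (r :: (real^'d) \<times> real \<Rightarrow> real). finite J \<Longrightarrow> \<forall>j\<in>J. 0 \<le> r j \<Longrightarrow>
      (\<integral>\<^sup>+t\<in>{0<..}. ennreal (scale_split_sum \<alpha>0 \<alpha>1 \<alpha> J r (t powr (p / (\<alpha>0 - \<alpha>1))) powr (h / p) / t) \<partial>lborel)
      \<le> ennreal D * (\<integral>\<^sup>+u\<in>{0<..}. ennreal (lorentz_profile \<alpha> J r u powr (h / p) / u) \<partial>lborel)"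
    using nn_integral_scale_split_sum_bound[of \<alpha> \<alpha>1 \<alpha>0 "h / p" "p / (\<alpha>0 - \<alpha>1)"] \<alpha> \<alpha>_between p h
    by (auto simp: \<alpha>_def)
  have "(\<integral>\<^sup>+t\<in>{0<..}. ennreal ((t powr (-\<theta>) * Kfun X0 n0 X1 n1 t (emb (ball_sum \<phi> B))) powr h / t) \<partial>lborel)
      \<le> ennreal (C * D) * (\<integral>\<^sup>+u\<in>{0<..}. ennreal (lorentz_profile \<alpha> B snd u powr (h / p) / u) \<partial>lborel)"
    if B: "admissible_balls B" for B
  proof -
    have "finite B" "\<forall>j\<in>B. 0 \<le> snd j"
      using B by (fastforce simp: admissible_balls_def)+
    then have "ennreal C * (\<integral>\<^sup>+t\<in>{0<..}. ennreal (scale_split_sum \<alpha>0 \<alpha>1 \<alpha> B snd (t powr (p / (\<alpha>0 - \<alpha>1))) powr (h / p) / t) \<partial>lborel)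
        \<le> ennreal C * (ennreal D * (\<integral>\<^sup>+u\<in>{0<..}. ennreal (lorentz_profile \<alpha> B snd u powr (h / p) / u) \<partial>lborel))"
      by (intro mult_left_mono split_bound) auto
    with Kfun_bound[OF B] C D show ?thesis
      by (simp add: ennreal_mult mult.assoc)
  qed
  with C D show ?thesis
    unfolding \<alpha>_def by (intro exI[of _ "C * D"]) auto
qed

text \<open>The finiteness hypothesis is essential: \<open>lorentz_norm\<close> applies \<open>enn2real\<close>, which sends \<open>\<infinity>\<close> to \<open>0\<close>.\<close>

lemma interp_norm_le_lorentz_norm:
  fixes J :: "'j set" and a :: "'j \<Rightarrow> real"
  assumes h: "0 < h" and p: "0 < p" and \<alpha>: "0 < \<alpha>" and D: "0 \<le> D"
    and finite: "(\<integral>\<^sup>+u\<in>{0<..}. ennreal (lorentz_profile \<alpha> J a u powr (h / p) / u) \<partial>lborel) < \<infinity>"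
    and bound: "(\<integral>\<^sup>+t\<in>{0<..}. ennreal ((t powr (-\<theta>) * Kfun X0 n0 X1 n1 t x) powr h / t) \<partial>lborel)
                 \<le> ennreal D * (\<integral>\<^sup>+u\<in>{0<..}. ennreal (lorentz_profile \<alpha> J a u powr (h / p) / u) \<partial>lborel)"
  shows "interp_norm X0 n0 X1 n1 \<theta> h x
       \<le> ennreal ((D / (h * \<alpha> / p)) powr (1 / h) * lorentz_norm \<alpha> (h * \<alpha> / p) J a powr (\<alpha> / p))"
proof -
  define q where "q = h * \<alpha> / p"
  have q: "0 < q" "q / \<alpha> = h / p" "1 / q * (\<alpha> / p) = 1 / h"
    using h p \<alpha> by (simp_all add: q_def field_simps)
  obtain R where R: "(\<integral>\<^sup>+u\<in>{0<..}. ennreal (lorentz_profile \<alpha> J a u powr (h / p) / u) \<partial>lborel) = ennreal R" "0 \<le> R"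
    using finite by (cases rule: ennreal_cases) auto
  define I where "I = (\<integral>\<^sup>+t\<in>{0<..}. ennreal ((t powr (-\<theta>) * Kfun X0 n0 X1 n1 t x) powr h / t) \<partial>lborel)"
  have I: "I \<le> ennreal (D * R)"
    using bound R D by (simp add: I_def ennreal_mult)
  then have "I \<noteq> \<infinity>" and "enn2real I \<le> D * R"
    using D R by (auto simp: top_unique enn2real_leI)
  then have "interp_norm X0 n0 X1 n1 \<theta> h x \<le> ennreal ((D * R) powr (1 / h))"
    unfolding interp_norm_def I_def[symmetric] Let_def using h by (auto intro: ennreal_leI powr_mono2)
  also have "(D * R) powr (1 / h) = (D / q) powr (1 / h) * ((q * R) powr (1 / q)) powr (\<alpha> / p)"
    using q D R by (simp add: powr_powr powr_mult[symmetric])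
  also have "(q * R) powr (1 / q) = lorentz_norm \<alpha> q J a"
    unfolding lorentz_norm_def using R q by (simp add: lorentz_profile_def)
  finally show ?thesis by (simp add: q_def)
qed

theorem lemma4p1:
  fixes X0 X1 :: "'v::real_vector set"
    and n0 n1 :: "'v \<Rightarrow> real"
    and emb :: "(real^'d \<Rightarrow> real) \<Rightarrow> 'v"
    and \<phi> :: "real^'d \<Rightarrow> real"
    and \<alpha>0 \<alpha>1 p \<theta> h :: real
  assumes compat: "compatible_banach X0 n0 X1 n1"
    and emb_add: "\<And>f g. emb (\<lambda>y. f y + g y) = emb f + emb g"
    and emb_scale: "\<And>c f. emb (\<lambda>y. c * f y) = c *\<^sub>R emb f"
    and a0: "\<alpha>0 > 0" and a01: "\<alpha>0 > \<alpha>1"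
    and p: "1 \<le> p"
    and th: "0 < \<theta>" "\<theta> < 1"
    and h: "h > 0"
    and hyp0: "\<exists>C. \<forall>\<B>. admissible_balls \<B> \<longrightarrow>
                 emb (ball_sum \<phi> \<B>) \<in> X0 \<and>
                 n0 (emb (ball_sum \<phi> \<B>)) \<le> C * (\<Sum>(x, r)\<in>\<B>. r powr \<alpha>0) powr (1 / p)"
    and hyp1: "\<exists>C. \<forall>\<B>. admissible_balls \<B> \<longrightarrow>
                 emb (ball_sum \<phi> \<B>) \<in> X1 \<and>
                 n1 (emb (ball_sum \<phi> \<B>)) \<le> C * (\<Sum>(x, r)\<in>\<B>. r powr \<alpha>1) powr (1 / p)"
    and ath: "(1 - \<theta>) * \<alpha>0 + \<theta> * \<alpha>1 > 0"
  shows "\<exists>C. \<forall>\<B>. admissible_balls \<B> \<longrightarrow>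
           interp_norm X0 n0 X1 n1 \<theta> h (emb (ball_sum \<phi> \<B>))
             \<le> ennreal (C * lorentz_norm ((1 - \<theta>) * \<alpha>0 + \<theta> * \<alpha>1)
                                   (h * ((1 - \<theta>) * \<alpha>0 + \<theta> * \<alpha>1) / p) \<B> snd
                          powr (((1 - \<theta>) * \<alpha>0 + \<theta> * \<alpha>1) / p))"
proof -
  have X: "banach_subspace X0 n0" "banach_subspace X1 n1"
    using compat by (simp_all add: compatible_banach_def)
  define \<alpha> where "\<alpha> = (1 - \<theta>) * \<alpha>0 + \<theta> * \<alpha>1"
  obtain D where D: "0 \<le> D" and bound: "\<And>\<B>. admissible_balls \<B> \<Longrightarrow>
      (\<integral>\<^sup>+t\<in>{0<..}. ennreal ((t powr (-\<theta>) * Kfun X0 n0 X1 n1 t (emb (ball_sum \<phi> \<B>))) powr h / t) \<partial>lborel)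
      \<le> ennreal D * (\<integral>\<^sup>+u\<in>{0<..}. ennreal (lorentz_profile \<alpha> \<B> snd u powr (h / p) / u) \<partial>lborel)"
    using nn_integral_interp_ball_sum_le[OF X emb_add hyp0 hyp1 _ h a01 th ath] p by (auto simp: \<alpha>_def)
  have "interp_norm X0 n0 X1 n1 \<theta> h (emb (ball_sum \<phi> \<B>))
      \<le> ennreal ((D / (h * \<alpha> / p)) powr (1 / h) * lorentz_norm \<alpha> (h * \<alpha> / p) \<B> snd powr (\<alpha> / p))"
    if \<B>: "admissible_balls \<B>" for \<B>
  proof (rule interp_norm_le_lorentz_norm)
    have "(\<integral>\<^sup>+u\<in>{0<..}. ennreal (lorentz_profile \<alpha> \<B> snd u powr (h / p) / u) \<partial>lborel)
        \<le> ennreal (real (card \<B>) powr (h / p) / (\<alpha> * (h / p)))"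
      using \<B> ath h p by (intro nn_integral_lorentz_profile_le) (auto simp: admissible_balls_def \<alpha>_def)
    then show "(\<integral>\<^sup>+u\<in>{0<..}. ennreal (lorentz_profile \<alpha> \<B> snd u powr (h / p) / u) \<partial>lborel) < \<infinity>"
      by (rule order.strict_trans1) simp
  qed (use bound[OF \<B>] h p ath D in \<open>auto simp: \<alpha>_def\<close>)
  then show ?thesis
    unfolding \<alpha>_def by blast
qed

end
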